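(* Let $(Y,\preceq,\prec,\to)$ be a solid vector space. The following are equivalent: (i) $Y$ is a normal vector space; (ii) the convergence in $Y$ is generated by a monotone norm on $Y$, i.e. there is a monotone norm $\|\cdot\|$ on $Y$ such that for all sequences $(x_n)$ and $x\in Y$, $x_n\to x$ iff $\|x_n-x\|\to0$; (iii) the convergence in $Y$ is generated by the order topology $\tau$ on $Y$, i.e. $x_n\to x$ iff $x_n\to x$ in $\tau$.
   Context: Vector space with convergence: a real vector space $Y$ with a relation $\to$ between sequences in $Y$ and points of $Y$ (uniqueness of limits not assumed) such that (C1) $x_n\to x$, $y_n\to y$ imply $x_n+y_n\to x+y$; (C2) $x_n\to x$, $\lambda\in\mathbb R$ imply $\lambda x_n\to\lambda x$; (C3) $\lambda_n\to\lambda$ in $\mathbb R$ imply $\lambda_n x\to\lambda x$. $A\subseteq Y$ is open if $x_n\to x\in A$ implies $x_n\in A$ for all but finitely many $n$; closed if $x_n\to x$, $x_n\in A$ $\forall n$ imply $x\in A$; $A^\circ$ is the union of all open subsets of $A$. A cone is a nonempty closed $K$ with $\lambda K\subseteq K$ ($\lambda\ge0$), $K+K\subseteq K$, $K\cap(-K)=\{0\}$; solid if $K\ne\{0\}$, $K^\circ\ne\emptyset$. A vector ordering is a partial order $\preceq$ with (V1) $x\preceq y\Rightarrow x+z\preceq y+z$; (V2) $\lambda\ge0$, $x\preceq y\Rightarrow\lambda x\preceq\lambda y$; (V3) $x_n\to x$, $y_n\to y$, $x_n\preceq y_n$ $\forall n\Rightarrow x\preceq y$. Solid vector space: positive cone $K=\{x:x\succeq0\}$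 solid, with $x\prec y$ iff $y-x\in K^\circ$. Normal: whenever $x_n\preceq y_n\preceq z_n$ for all $n$, $x_n\to x$ and $z_n\to x$, then $y_n\to x$. Monotone norm: $\|x\|\le\|y\|$ whenever $0\preceq x\preceq y$. Order topology: basis the open intervals $(a,b)=\{x:a\prec x\prec b\}$, $a\prec b$. *)

theory Defs
  imports "HOL-Analysis.Analysis"
begin

definition vs_convergence :: "((nat \<Rightarrow> 'a::real_vector) \<Rightarrow> 'a \<Rightarrow> bool) \<Rightarrow> bool" where
  "vs_convergence conv \<longleftrightarrow>
     (\<forall>x y a b. conv x a \<and> conv y b \<longrightarrow> conv (\<lambda>n. x n + y n) (a + b)) \<and>
     (\<forall>x a (c::real). conv x a \<longrightarrow> conv (\<lambda>n. c *\<^sub>R x n) (c *\<^sub>R a)) \<and>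
     (\<forall>(l::nat \<Rightarrow> real) c z. l \<longlonglongrightarrow> c \<longrightarrow> conv (\<lambda>n. l n *\<^sub>R z) (c *\<^sub>R z))"

definition conv_open :: "((nat \<Rightarrow> 'a) \<Rightarrow> 'a \<Rightarrow> bool) \<Rightarrow> 'a set \<Rightarrow> bool" where
  "conv_open conv A \<longleftrightarrow> (\<forall>x a. conv x a \<and> a \<in> A \<longrightarrow> (\<forall>\<^sub>F n in sequentially. x n \<in> A))"

definition conv_closed :: "((nat \<Rightarrow> 'a) \<Rightarrow> 'a \<Rightarrow> bool) \<Rightarrow> 'a set \<Rightarrow> bool" where
  "conv_closed conv A \<longleftrightarrow> (\<forall>x a. conv x a \<and> (\<forall>n. x n \<in> A) \<longrightarrow> a \<in> A)"

definition conv_interior :: "((nat \<Rightarrow> 'a) \<Rightarrow> 'a \<Rightarrow> bool) \<Rightarrow> 'a set \<Rightarrow> 'a set" where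
  "conv_interior conv A = \<Union>{U. U \<subseteq> A \<and> conv_open conv U}"

definition conv_cone :: "((nat \<Rightarrow> 'a::real_vector) \<Rightarrow> 'a \<Rightarrow> bool) \<Rightarrow> 'a set \<Rightarrow> bool" where
  "conv_cone conv K \<longleftrightarrow> K \<noteq> {} \<and> conv_closed conv K \<and>
     (\<forall>c::real. \<forall>x\<in>K. c \<ge> 0 \<longrightarrow> c *\<^sub>R x \<in> K) \<and>
     (\<forall>x\<in>K. \<forall>y\<in>K. x + y \<in> K) \<and> K \<inter> uminus ` K = {0}"

definition solid_cone :: "((nat \<Rightarrow> 'a::real_vector) \<Rightarrow> 'a \<Rightarrow> bool) \<Rightarrow> 'a set \<Rightarrow> bool" where
  "solid_cone conv K \<longleftrightarrow> conv_cone conv K \<and> K \<noteq> {0} \<and> conv_interior conv K \<noteq> {}"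

definition vector_ordering ::
  "((nat \<Rightarrow> 'a::real_vector) \<Rightarrow> 'a \<Rightarrow> bool) \<Rightarrow> ('a \<Rightarrow> 'a \<Rightarrow> bool) \<Rightarrow> bool" where
  "vector_ordering conv le \<longleftrightarrow>
     (\<forall>x. le x x) \<and> (\<forall>x y z. le x y \<and> le y z \<longrightarrow> le x z) \<and> (\<forall>x y. le x y \<and> le y x \<longrightarrow> x = y) \<and>
     (\<forall>x y z. le x y \<longrightarrow> le (x + z) (y + z)) \<and>
     (\<forall>(c::real) x y. c \<ge> 0 \<and> le x y \<longrightarrow> le (c *\<^sub>R x) (c *\<^sub>R y)) \<and>
     (\<forall>x y a b. conv x a \<and> conv y b \<and> (\<forall>n. le (x n) (y n)) \<longrightarrow> le a b)"

definition pos_cone :: "('a::real_vector \<Rightarrow> 'a \<Rightarrow> bool) \<Rightarrow> 'a set" where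
  "pos_cone le = {x. le 0 x}"

definition solid_vector_space ::
  "((nat \<Rightarrow> 'a::real_vector) \<Rightarrow> 'a \<Rightarrow> bool) \<Rightarrow> ('a \<Rightarrow> 'a \<Rightarrow> bool) \<Rightarrow> ('a \<Rightarrow> 'a \<Rightarrow> bool) \<Rightarrow> bool" where
  "solid_vector_space conv le lt \<longleftrightarrow>
     vs_convergence conv \<and> vector_ordering conv le \<and> solid_cone conv (pos_cone le) \<and>
     (\<forall>x y. lt x y \<longleftrightarrow> y - x \<in> conv_interior conv (pos_cone le))"

definition normal_space ::
  "((nat \<Rightarrow> 'a) \<Rightarrow> 'a \<Rightarrow> bool) \<Rightarrow> ('a \<Rightarrow> 'a \<Rightarrow> bool) \<Rightarrow> bool" where
  "normal_space conv le \<longleftrightarrow>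
     (\<forall>x y z a. (\<forall>n. le (x n) (y n) \<and> le (y n) (z n)) \<and> conv x a \<and> conv z a \<longrightarrow> conv y a)"

definition is_norm :: "('a::real_vector \<Rightarrow> real) \<Rightarrow> bool" where
  "is_norm N \<longleftrightarrow> (\<forall>x. N x \<ge> 0) \<and> (\<forall>x. N x = 0 \<longleftrightarrow> x = 0) \<and>
     (\<forall>(c::real) x. N (c *\<^sub>R x) = \<bar>c\<bar> * N x) \<and> (\<forall>x y. N (x + y) \<le> N x + N y)"

definition monotone_norm :: "('a::real_vector \<Rightarrow> 'a \<Rightarrow> bool) \<Rightarrow> ('a \<Rightarrow> real) \<Rightarrow> bool" where
  "monotone_norm le N \<longleftrightarrow> is_norm N \<and> (\<forall>x y. le 0 x \<and> le x y \<longrightarrow> N x \<le> N y)"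

definition order_topology_of :: "('a \<Rightarrow> 'a \<Rightarrow> bool) \<Rightarrow> 'a topology" where
  "order_topology_of lt = topology_generated_by {{x. lt a x \<and> lt x b} | a b. lt a b}"

end

theory Submission imports Defs begin

text \<open>Fix a point e in the interior of the positive cone. Interior points absorb small
  perturbations, so every x satisfies -t e \<preceq> x \<preceq> t e for some t, and the gauge
  N x = inf {t \<ge> 0. -t e \<preceq> x \<preceq> t e} of the order interval [-e, e] is a monotone norm
  (the infimum is attained because the ordering is closed under limits). The order
  intervals (a - \<epsilon>e, a + \<epsilon>e) form a neighbourhood base of a in the order topology and are
  squeezed between the N-balls, so convergence in the order topology is exactly
  N-convergence, and convergent sequences N-converge. The converse, that N(x_n - a) \<rightarrow> 0
  forces x_n \<rightarrow> a, is an instance of normality, since -N(x_n - a) e \<preceq> x_n - a \<preceq> N(x_n - a) e.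
  Finally any monotone norm generating the convergence makes the space normal, because
  x \<preceq> y \<preceq> z implies \<parallel>y - a\<parallel> \<le> \<parallel>z - a\<parallel> + 2\<parallel>x - a\<parallel>.\<close>

lemma limitin_topology_generated_by_iff:
  assumes "a \<in> \<Union>B"
  shows "limitin (topology_generated_by B) f a sequentially \<longleftrightarrow>
    (\<forall>U\<in>B. a \<in> U \<longrightarrow> eventually (\<lambda>n. f n \<in> U) sequentially)"
proof
  assume "limitin (topology_generated_by B) f a sequentially"
  then show "\<forall>U\<in>B. a \<in> U \<longrightarrow> eventually (\<lambda>n. f n \<in> U) sequentially"
    unfolding limitin_def using topology_generated_by_Basis by blast
next
  assume basis: "\<forall>U\<in>B. a \<in> U \<longrightarrow> eventually (\<lambda>n. f n \<in> U) sequentially"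
  have "generate_topology_on B U \<Longrightarrow> a \<in> U \<Longrightarrow> eventually (\<lambda>n. f n \<in> U) sequentially" for U
  proof (induction rule: generate_topology_on.induct)
    case Empty
    then show ?case by simp
  next
    case (Int U V)
    then show ?case using eventually_conj by fastforce
  next
    case (UN K)
    then obtain k where "k \<in> K" "a \<in> k" by blast
    with UN have "eventually (\<lambda>n. f n \<in> k) sequentially" by blast
    then show ?case by (rule eventually_mono) (use \<open>k \<in> K\<close> in blast)
  next
    case (Basis U)
    then show ?case using basis by blast
  qed
  then show "limitin (topology_generated_by B) f a sequentially"
    unfolding limitin_def using assms openin_topology_generated_by_iff by auto
qed

lemma conv_open_image:
  assumes "conv_open conv U" and "\<And>y. f (g y) = y" and "\<And>u. g (f u) = u"
    and "\<And>y b. conv y b \<Longrightarrow> conv (\<lambda>n. g (y n)) (g b)"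
  shows "conv_open conv (f ` U)"
  unfolding conv_open_def
proof (intro allI impI)
  fix y b assume "conv y b \<and> b \<in> f ` U"
  then obtain u where "u \<in> U" "b = f u" "conv y b" by blast
  then have "conv (\<lambda>n. g (y n)) u" using assms(3,4) by metis
  then have "eventually (\<lambda>n. g (y n) \<in> U) sequentially"
    using assms(1) \<open>u \<in> U\<close> unfolding conv_open_def by blast
  then show "eventually (\<lambda>n. y n \<in> f ` U) sequentially"
    by (rule eventually_mono) (metis assms(2) imageI)
qed

locale ordered_conv_space =
  fixes conv :: "(nat \<Rightarrow> 'a::real_vector) \<Rightarrow> 'a \<Rightarrow> bool" and le :: "'a \<Rightarrow> 'a \<Rightarrow> bool"
  assumes convergence: "vs_convergence conv" and ordering: "vector_ordering conv le"
begin

abbreviation pos_interior :: "'a set" where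
  "pos_interior \<equiv> conv_interior conv (pos_cone le)"

lemma conv_add: "conv x a \<Longrightarrow> conv y b \<Longrightarrow> conv (\<lambda>n. x n + y n) (a + b)"
  using convergence unfolding vs_convergence_def by blast

lemma conv_scaleR: "conv x a \<Longrightarrow> conv (\<lambda>n. c *\<^sub>R x n) (c *\<^sub>R a)"
  using convergence unfolding vs_convergence_def by blast

lemma conv_scaleR_left: "l \<longlonglongrightarrow> c \<Longrightarrow> conv (\<lambda>n. l n *\<^sub>R z) (c *\<^sub>R z)"
  using convergence unfolding vs_convergence_def by blast

lemma conv_const: "conv (\<lambda>n. z) z"
  using conv_scaleR_left[of "\<lambda>n. 1" 1 z] by simp

lemma conv_diff: "conv x a \<Longrightarrow> conv y b \<Longrightarrow> conv (\<lambda>n. x n - y n) (a - b)"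
  using conv_add[of x a "\<lambda>n. (-1) *\<^sub>R y n" "(-1) *\<^sub>R b"] conv_scaleR[of y b "-1"] by simp

lemma le_refl: "le x x"
  using ordering unfolding vector_ordering_def by blast

lemma le_trans: "le x y \<Longrightarrow> le y z \<Longrightarrow> le x z"
  using ordering unfolding vector_ordering_def by blast

lemma le_antisym: "le x y \<Longrightarrow> le y x \<Longrightarrow> x = y"
  using ordering unfolding vector_ordering_def by blast

lemma le_add_right: "le x y \<Longrightarrow> le (x + z) (y + z)"
  using ordering unfolding vector_ordering_def by blast

lemma le_scaleR: "0 \<le> c \<Longrightarrow> le x y \<Longrightarrow> le (c *\<^sub>R x) (c *\<^sub>R y)"
  using ordering unfolding vector_ordering_def by blast

lemma le_limit: "conv x a \<Longrightarrow> conv y b \<Longrightarrow> (\<And>n. le (x n) (y n)) \<Longrightarrow> le a b"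
  using ordering unfolding vector_ordering_def by blast

lemma le_iff_diff_nonneg: "le x y \<longleftrightarrow> le 0 (y - x)"
  using le_add_right[of x y "-x"] le_add_right[of 0 "y - x" x] by auto

lemma le_minus: "le x y \<Longrightarrow> le (-y) (-x)"
  by (metis le_iff_diff_nonneg diff_minus_eq_add uminus_add_conv_diff)

lemma le_add: "le a b \<Longrightarrow> le c d \<Longrightarrow> le (a + c) (b + d)"
  by (metis le_add_right le_trans add.commute)

lemma le_symmetric_interval_iff: "le (-u) x \<and> le x u \<longleftrightarrow> le 0 (x + u) \<and> le 0 (u - x)"
  using le_iff_diff_nonneg[of "-u" x] le_iff_diff_nonneg[of x u] by simp

lemma pos_interior_nonneg: "v \<in> pos_interior \<Longrightarrow> le 0 v"
  unfolding conv_interior_def pos_cone_def by blast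

lemma pos_interior_eventually:
  assumes "v \<in> pos_interior" and "conv y v"
  shows "eventually (\<lambda>n. y n \<in> pos_interior) sequentially"
proof -
  obtain U where U: "U \<subseteq> pos_cone le" "conv_open conv U" "v \<in> U"
    using assms(1) unfolding conv_interior_def by blast
  then have "eventually (\<lambda>n. y n \<in> U) sequentially"
    using assms(2) unfolding conv_open_def by blast
  moreover have "U \<subseteq> pos_interior" using U unfolding conv_interior_def by blast
  ultimately show ?thesis by (auto elim: eventually_mono)
qed

lemma pos_interior_absorbing:
  assumes "v \<in> pos_interior" and "l \<longlonglongrightarrow> 0"
  shows "eventually (\<lambda>n. v + l n *\<^sub>R z \<in> pos_interior) sequentially"
  using pos_interior_eventually[OF assms(1)] conv_add[OF conv_const conv_scaleR_left[OF assms(2)]]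
  by simp

lemma pos_interior_image:
  assumes "v \<in> pos_interior" and "\<And>u. le 0 u \<Longrightarrow> le 0 (f u)"
    and "\<And>y. f (g y) = y" and "\<And>u. g (f u) = u"
    and "\<And>y b. conv y b \<Longrightarrow> conv (\<lambda>n. g (y n)) (g b)"
  shows "f v \<in> pos_interior"
proof -
  obtain U where U: "U \<subseteq> pos_cone le" "conv_open conv U" "v \<in> U"
    using assms(1) unfolding conv_interior_def by blast
  have "f ` U \<subseteq> pos_cone le" using U(1) assms(2) unfolding pos_cone_def by blast
  moreover have "conv_open conv (f ` U)" using conv_open_image[OF U(2) assms(3-5)] .
  ultimately show ?thesis using U(3) unfolding conv_interior_def by blast
qed

lemma pos_interior_scaleR:
  assumes "v \<in> pos_interior" and "0 < c"
  shows "c *\<^sub>R v \<in> pos_interior"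
proof (rule pos_interior_image[OF assms(1), where g = "\<lambda>y. inverse c *\<^sub>R y"])
  show "le 0 (c *\<^sub>R u)" if "le 0 u" for u
    using le_scaleR[of c 0 u] that assms(2) by simp
  show "conv (\<lambda>n. inverse c *\<^sub>R y n) (inverse c *\<^sub>R b)" if "conv y b" for y b
    using that by (rule conv_scaleR)
qed (use assms(2) in simp_all)

lemma pos_interior_add_nonneg:
  assumes "v \<in> pos_interior" and "le 0 k"
  shows "v + k \<in> pos_interior"
proof (rule pos_interior_image[OF assms(1), where g = "\<lambda>y. y - k"])
  show "le 0 (u + k)" if "le 0 u" for u
    using le_add[OF that assms(2)] by simp
  show "conv (\<lambda>n. y n - k) (b - k)" if "conv y b" for y b
    using that conv_const by (rule conv_diff)
qed simp_all

lemma monotone_norm_sandwich: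
  assumes "monotone_norm le M" and "le x y" and "le y z"
  shows "M (y - a) \<le> M (z - a) + 2 * M (x - a)"
proof -
  have scale: "\<And>c v. M (c *\<^sub>R v) = \<bar>c\<bar> * M v"
    and tri: "\<And>u v. M (u + v) \<le> M u + M v"
    and mono: "\<And>u v. le 0 u \<Longrightarrow> le u v \<Longrightarrow> M u \<le> M v"
    using assms(1) unfolding monotone_norm_def is_norm_def by auto
  have "le 0 (y - x)" "le (y - x) (z - x)"
    using assms(2,3) le_iff_diff_nonneg[of x y] le_add_right[of y z "- x"] by auto
  then have "M (y - a) \<le> M (z - x) + M (x - a)"
    using tri[of "y - x" "x - a"] mono by fastforce
  also have "M (z - x) \<le> M (z - a) + M (a - x)" using tri[of "z - a" "a - x"] by simp
  also have "M (a - x) = M (x - a)" using scale[of "-1" "x - a"] by simp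
  finally show ?thesis by simp
qed

lemma normal_if_monotone_norm_generates:
  assumes norm: "monotone_norm le M" and generates: "\<And>x a. conv x a \<longleftrightarrow> (\<lambda>n. M (x n - a)) \<longlonglongrightarrow> 0"
  shows "normal_space conv le"
  unfolding normal_space_def
proof (intro allI impI)
  fix x y z a assume H: "(\<forall>n. le (x n) (y n) \<and> le (y n) (z n)) \<and> conv x a \<and> conv z a"
  then have "(\<lambda>n. M (x n - a)) \<longlonglongrightarrow> 0" "(\<lambda>n. M (z n - a)) \<longlonglongrightarrow> 0"
    using generates by blast+
  from tendsto_add[OF this(2) tendsto_mult[OF tendsto_const this(1)], of 2]
  have bound: "(\<lambda>n. M (z n - a) + 2 * M (x n - a)) \<longlonglongrightarrow> 0" by simp
  show "conv y a" unfolding generates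
  proof (rule tendsto_sandwich[OF _ _ tendsto_const bound])
    show "eventually (\<lambda>n. 0 \<le> M (y n - a)) sequentially"
      using norm unfolding monotone_norm_def is_norm_def by simp
    show "eventually (\<lambda>n. M (y n - a) \<le> M (z n - a) + 2 * M (x n - a)) sequentially"
      using H monotone_norm_sandwich[OF norm] by simp
  qed
qed

end

locale order_unit_space = ordered_conv_space +
  fixes lt :: "'a \<Rightarrow> 'a \<Rightarrow> bool" and e :: 'a
  assumes lt_iff: "lt x y \<longleftrightarrow> y - x \<in> pos_interior"
    and unit: "e \<in> pos_interior"
begin

definition unit_bounds :: "'a \<Rightarrow> real set" where
  "unit_bounds x = {t. 0 \<le> t \<and> le (-(t *\<^sub>R e)) x \<and> le x (t *\<^sub>R e)}"

definition unit_norm :: "'a \<Rightarrow> real" where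
  "unit_norm x = Inf (unit_bounds x)"

lemma unit_nonneg_multiple: "0 \<le> t \<Longrightarrow> le 0 (t *\<^sub>R e)"
  using le_scaleR[OF _ pos_interior_nonneg[OF unit], of t] by simp

lemma unit_bounds_nonempty: "unit_bounds x \<noteq> {}"
proof -
  have "eventually (\<lambda>n. e + inverse (real (Suc n)) *\<^sub>R x \<in> pos_interior \<and>
                         e + inverse (real (Suc n)) *\<^sub>R (-x) \<in> pos_interior) sequentially"
    using unit by (intro eventually_conj pos_interior_absorbing LIMSEQ_inverse_real_of_nat)
  then obtain n where n: "e + inverse (real (Suc n)) *\<^sub>R x \<in> pos_interior"
    "e + inverse (real (Suc n)) *\<^sub>R (-x) \<in> pos_interior"
    unfolding eventually_sequentially by blast
  have "le 0 (t *\<^sub>R (e + inverse t *\<^sub>R y))" if "e + inverse t *\<^sub>R y \<in> pos_interior" "0 \<le> t" for t y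
    using le_scaleR[OF that(2) pos_interior_nonneg[OF that(1)]] by simp
  from this[OF n(1)] this[OF n(2)]
  have "le 0 (real (Suc n) *\<^sub>R e + x)" "le 0 (real (Suc n) *\<^sub>R e - x)"
    by (simp_all add: scaleR_add_right scaleR_diff_right)
  then have "real (Suc n) \<in> unit_bounds x"
    unfolding unit_bounds_def le_symmetric_interval_iff by (simp add: add.commute)
  then show ?thesis by blast
qed

lemma unit_bounds_upward_closed: "t \<in> unit_bounds x \<Longrightarrow> t \<le> s \<Longrightarrow> s \<in> unit_bounds x"
proof -
  assume t: "t \<in> unit_bounds x" and "t \<le> s"
  then have "le (t *\<^sub>R e) (s *\<^sub>R e)"
    using unit_nonneg_multiple[of "s - t"] le_iff_diff_nonneg[of "t *\<^sub>R e" "s *\<^sub>R e"]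
    by (simp add: scaleR_diff_left)
  then show "s \<in> unit_bounds x"
    using t \<open>t \<le> s\<close> le_minus unfolding unit_bounds_def by (auto intro: le_trans)
qed

lemma unit_bounds_uminus: "unit_bounds (-x) = unit_bounds x"
  unfolding unit_bounds_def using le_minus by fastforce

lemma unit_bounds_scaleR: "0 \<le> c \<Longrightarrow> t \<in> unit_bounds x \<Longrightarrow> c * t \<in> unit_bounds (c *\<^sub>R x)"
  unfolding unit_bounds_def using le_scaleR[of c] by (metis (mono_tags) mem_Collect_eq
      mult_nonneg_nonneg scaleR_minus_right scaleR_scaleR)

lemma unit_norm_nonneg: "0 \<le> unit_norm x"
  unfolding unit_norm_def using unit_bounds_nonempty
  by (rule cInf_greatest) (auto simp: unit_bounds_def)

lemma unit_norm_le: "t \<in> unit_bounds x \<Longrightarrow> unit_norm x \<le> t"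
  unfolding unit_norm_def by (rule cInf_lower) (auto simp: bdd_below_def unit_bounds_def)

lemma unit_norm_in_unit_bounds: "unit_norm x \<in> unit_bounds x"
proof -
  define t where "t n = unit_norm x + inverse (real (Suc n))" for n
  have t_bounds: "t n \<in> unit_bounds x" for n
  proof -
    have "Inf (unit_bounds x) < t n" unfolding t_def unit_norm_def by simp
    then obtain s where "s \<in> unit_bounds x" "s < t n"
      using cInf_less_iff[OF unit_bounds_nonempty] by (auto simp: bdd_below_def unit_bounds_def)
    then show ?thesis using unit_bounds_upward_closed by auto
  qed
  have "t \<longlonglongrightarrow> unit_norm x"
    unfolding t_def using tendsto_add[OF tendsto_const LIMSEQ_inverse_real_of_nat] by simp
  then have "conv (\<lambda>n. t n *\<^sub>R e) (unit_norm x *\<^sub>R e)"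
    and "conv (\<lambda>n. (- t n) *\<^sub>R e) ((- unit_norm x) *\<^sub>R e)"
    by (auto intro!: conv_scaleR_left tendsto_minus simp del: scaleR_minus_left)
  then have "le x (unit_norm x *\<^sub>R e)" "le ((- unit_norm x) *\<^sub>R e) x"
    using t_bounds le_limit[OF conv_const] le_limit[OF _ conv_const]
    unfolding unit_bounds_def by auto
  then show ?thesis using unit_norm_nonneg unfolding unit_bounds_def by simp
qed

lemma unit_norm_bounds: "le (-(unit_norm x *\<^sub>R e)) x" "le x (unit_norm x *\<^sub>R e)"
  using unit_norm_in_unit_bounds unfolding unit_bounds_def by auto

lemma unit_norm_eq_0_iff: "unit_norm x = 0 \<longleftrightarrow> x = 0"
proof
  assume "unit_norm x = 0"
  then show "x = 0" using unit_norm_bounds[of x] le_antisym by simp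
next
  assume "x = 0"
  then have "0 \<in> unit_bounds x" unfolding unit_bounds_def using le_refl by simp
  then show "unit_norm x = 0" using unit_norm_le unit_norm_nonneg by (meson order_antisym)
qed

lemma unit_norm_scaleR_le: "unit_norm (c *\<^sub>R x) \<le> \<bar>c\<bar> * unit_norm x"
proof (cases "0 \<le> c")
  case True
  then show ?thesis using unit_norm_le unit_bounds_scaleR unit_norm_in_unit_bounds by simp
next
  case False
  then have "\<bar>c\<bar> * unit_norm x \<in> unit_bounds ((-c) *\<^sub>R (-x))"
    using unit_bounds_scaleR[of "-c"] unit_norm_in_unit_bounds unit_bounds_uminus by simp
  then show ?thesis using unit_norm_le by simp
qed

lemma unit_norm_scaleR: "unit_norm (c *\<^sub>R x) = \<bar>c\<bar> * unit_norm x"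
proof (cases "c = 0")
  case True
  then show ?thesis using unit_norm_eq_0_iff by simp
next
  case False
  have "unit_norm x = unit_norm (inverse c *\<^sub>R (c *\<^sub>R x))" using False by simp
  also have "\<dots> \<le> \<bar>inverse c\<bar> * unit_norm (c *\<^sub>R x)" by (rule unit_norm_scaleR_le)
  finally have "\<bar>c\<bar> * unit_norm x \<le> unit_norm (c *\<^sub>R x)"
    using False by (simp add: abs_inverse field_simps)
  then show ?thesis using unit_norm_scaleR_le[of c x] by simp
qed

lemma unit_norm_triangle: "unit_norm (x + y) \<le> unit_norm x + unit_norm y"
proof -
  have "unit_norm x + unit_norm y \<in> unit_bounds (x + y)"
    using le_add[OF unit_norm_bounds(1)[of x] unit_norm_bounds(1)[of y]]
      le_add[OF unit_norm_bounds(2)[of x] unit_norm_bounds(2)[of y]]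
      unit_norm_nonneg[of x] unit_norm_nonneg[of y]
    unfolding unit_bounds_def by (simp add: scaleR_add_left)
  then show ?thesis by (rule unit_norm_le)
qed

lemma unit_norm_mono: "le 0 x \<Longrightarrow> le x y \<Longrightarrow> unit_norm x \<le> unit_norm y"
proof -
  assume "le 0 x" "le x y"
  have "le (-(unit_norm y *\<^sub>R e)) 0"
    using le_minus[OF unit_nonneg_multiple[OF unit_norm_nonneg[of y]]] by simp
  then have "le (-(unit_norm y *\<^sub>R e)) x" using \<open>le 0 x\<close> by (rule le_trans)
  moreover have "le x (unit_norm y *\<^sub>R e)"
    using le_trans[OF \<open>le x y\<close> unit_norm_bounds(2)[of y]] .
  ultimately have "unit_norm y \<in> unit_bounds x"
    using unit_norm_nonneg[of y] unfolding unit_bounds_def by simp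
  then show ?thesis by (rule unit_norm_le)
qed

lemma monotone_norm_unit_norm: "monotone_norm le unit_norm"
  unfolding monotone_norm_def is_norm_def
  using unit_norm_nonneg unit_norm_eq_0_iff unit_norm_scaleR unit_norm_triangle unit_norm_mono
  by blast

lemma lt_trans: "lt p a \<Longrightarrow> lt a q \<Longrightarrow> lt p q"
  using pos_interior_add_nonneg[of "q - a" "a - p"] lt_iff pos_interior_nonneg
  by (simp add: algebra_simps)

lemma lt_imp_le: "lt x y \<Longrightarrow> le x y"
  using lt_iff pos_interior_nonneg le_iff_diff_nonneg by blast

lemma lt_unit_interval: "0 < \<epsilon> \<Longrightarrow> lt (a - \<epsilon> *\<^sub>R e) a \<and> lt a (a + \<epsilon> *\<^sub>R e)"
  using pos_interior_scaleR[OF unit] lt_iff by simp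

lemma unit_norm_le_if_in_unit_interval:
  assumes "le (a - \<epsilon> *\<^sub>R e) v" and "le v (a + \<epsilon> *\<^sub>R e)" and "0 \<le> \<epsilon>"
  shows "unit_norm (v - a) \<le> \<epsilon>"
proof (rule unit_norm_le)
  have "le 0 (v - (a - \<epsilon> *\<^sub>R e))" "le 0 ((a + \<epsilon> *\<^sub>R e) - v)"
    using assms(1,2) le_iff_diff_nonneg by blast+
  then show "\<epsilon> \<in> unit_bounds (v - a)"
    using assms(3) unfolding unit_bounds_def le_symmetric_interval_iff by (simp add: algebra_simps)
qed

lemma limitin_order_topology_iff:
  "limitin (order_topology_of lt) f a sequentially \<longleftrightarrow>
   (\<forall>p q. lt p a \<longrightarrow> lt a q \<longrightarrow> eventually (\<lambda>n. lt p (f n) \<and> lt (f n) q) sequentially)"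
  (is "_ \<longleftrightarrow> ?intervals")
proof -
  let ?B = "{{x. lt p x \<and> lt x q} | p q. lt p q}"
  have "lt (a - e) a" "lt a (a + e)" using lt_unit_interval[of 1 a] by simp_all
  moreover from this have "{x. lt (a - e) x \<and> lt x (a + e)} \<in> ?B"
    using lt_trans[of "a - e" a "a + e"] by blast
  ultimately have "a \<in> \<Union>?B" by (intro UnionI) auto
  then have "limitin (order_topology_of lt) f a sequentially \<longleftrightarrow>
     (\<forall>U\<in>?B. a \<in> U \<longrightarrow> eventually (\<lambda>n. f n \<in> U) sequentially)"
    unfolding order_topology_of_def by (rule limitin_topology_generated_by_iff)
  also have "\<dots> \<longleftrightarrow> ?intervals"
  proof
    assume basis: "\<forall>U\<in>?B. a \<in> U \<longrightarrow> eventually (\<lambda>n. f n \<in> U) sequentially"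
    show ?intervals
    proof (intro allI impI)
      fix p q assume "lt p a" "lt a q"
      then have "{x. lt p x \<and> lt x q} \<in> ?B" using lt_trans[of p a q] by blast
      with basis \<open>lt p a\<close> \<open>lt a q\<close> have "eventually (\<lambda>n. f n \<in> {x. lt p x \<and> lt x q}) sequentially"
        by blast
      then show "eventually (\<lambda>n. lt p (f n) \<and> lt (f n) q) sequentially" by simp
    qed
  next
    assume intervals: ?intervals
    show "\<forall>U\<in>?B. a \<in> U \<longrightarrow> eventually (\<lambda>n. f n \<in> U) sequentially"
    proof (intro ballI impI)
      fix U assume "U \<in> ?B" "a \<in> U"
      then obtain p q where "U = {x. lt p x \<and> lt x q}" by blast
      with intervals \<open>a \<in> U\<close> show "eventually (\<lambda>n. f n \<in> U) sequentially" by auto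
    qed
  qed
  finally show ?thesis .
qed

lemma limitin_order_topology_iff_unit_norm:
  "limitin (order_topology_of lt) x a sequentially \<longleftrightarrow> (\<lambda>n. unit_norm (x n - a)) \<longlonglongrightarrow> 0"
proof
  assume lim: "limitin (order_topology_of lt) x a sequentially"
  show "(\<lambda>n. unit_norm (x n - a)) \<longlonglongrightarrow> 0"
  proof (rule order_tendstoI)
    fix \<epsilon> :: real assume "0 < \<epsilon>"
    then have "eventually (\<lambda>n. lt (a - (\<epsilon>/2) *\<^sub>R e) (x n) \<and> lt (x n) (a + (\<epsilon>/2) *\<^sub>R e)) sequentially"
      using lim lt_unit_interval[of "\<epsilon>/2"] unfolding limitin_order_topology_iff by simp
    then show "eventually (\<lambda>n. unit_norm (x n - a) < \<epsilon>) sequentially"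
    proof (rule eventually_mono)
      fix n assume "lt (a - (\<epsilon>/2) *\<^sub>R e) (x n) \<and> lt (x n) (a + (\<epsilon>/2) *\<^sub>R e)"
      then have "unit_norm (x n - a) \<le> \<epsilon>/2"
        using \<open>0 < \<epsilon>\<close> by (intro unit_norm_le_if_in_unit_interval) (auto dest: lt_imp_le)
      then show "unit_norm (x n - a) < \<epsilon>" using \<open>0 < \<epsilon>\<close> by simp
    qed
  qed (use unit_norm_nonneg in \<open>auto intro: always_eventually less_le_trans\<close>)
next
  assume lim: "(\<lambda>n. unit_norm (x n - a)) \<longlonglongrightarrow> 0"
  show "limitin (order_topology_of lt) x a sequentially"
    unfolding limitin_order_topology_iff
  proof (intro allI impI)
    fix p q assume "lt p a" "lt a q"
    then have "eventually (\<lambda>n. (a - p) + (- unit_norm (x n - a)) *\<^sub>R e \<in> pos_interior \<and>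
                              (q - a) + (- unit_norm (x n - a)) *\<^sub>R e \<in> pos_interior) sequentially"
      using lt_iff tendsto_minus[OF lim] by (intro eventually_conj pos_interior_absorbing) auto
    then show "eventually (\<lambda>n. lt p (x n) \<and> lt (x n) q) sequentially"
    proof (rule eventually_mono)
      fix n
      let ?t = "unit_norm (x n - a)"
      assume "(a - p) + (- ?t) *\<^sub>R e \<in> pos_interior \<and> (q - a) + (- ?t) *\<^sub>R e \<in> pos_interior"
      moreover have "le 0 ((x n - a) + ?t *\<^sub>R e)" "le 0 (?t *\<^sub>R e - (x n - a))"
        using le_symmetric_interval_iff[of "?t *\<^sub>R e" "x n - a"] unit_norm_bounds[of "x n - a"]
        by blast+
      ultimately have "((a - p) + (- ?t) *\<^sub>R e) + ((x n - a) + ?t *\<^sub>R e) \<in> pos_interior"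
        and "((q - a) + (- ?t) *\<^sub>R e) + (?t *\<^sub>R e - (x n - a)) \<in> pos_interior"
        using pos_interior_add_nonneg by blast+
      then show "lt p (x n) \<and> lt (x n) q" unfolding lt_iff by (simp add: algebra_simps)
    qed
  qed
qed

lemma unit_norm_tendsto_if_conv:
  assumes "conv x a"
  shows "(\<lambda>n. unit_norm (x n - a)) \<longlonglongrightarrow> 0"
proof -
  have "eventually (\<lambda>n. lt p (x n) \<and> lt (x n) q) sequentially" if "lt p a" "lt a q" for p q
    using pos_interior_eventually[of "a - p" "\<lambda>n. x n - p"] pos_interior_eventually[of "q - a" "\<lambda>n. q - x n"]
      conv_diff[OF assms conv_const] conv_diff[OF conv_const assms] that
    unfolding lt_iff by (intro eventually_conj) simp_all
  then show ?thesis
    unfolding limitin_order_topology_iff_unit_norm[symmetric] limitin_order_topology_iff by blast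
qed

lemma conv_if_unit_norm_tendsto:
  assumes "normal_space conv le" and lim: "(\<lambda>n. unit_norm (x n - a)) \<longlonglongrightarrow> 0"
  shows "conv x a"
proof -
  have squeeze: "\<And>X Y Z b. \<forall>n. le (X n) (Y n) \<and> le (Y n) (Z n) \<Longrightarrow> conv X b \<Longrightarrow> conv Z b \<Longrightarrow> conv Y b"
    using assms(1) unfolding normal_space_def by blast
  have "conv (\<lambda>n. - (unit_norm (x n - a) *\<^sub>R e)) 0" "conv (\<lambda>n. unit_norm (x n - a) *\<^sub>R e) 0"
    using conv_scaleR_left[OF tendsto_minus[OF lim]] conv_scaleR_left[OF lim] by simp_all
  then have "conv (\<lambda>n. x n - a) 0"
    by (rule squeeze[rotated]) (simp add: unit_norm_bounds)
  from conv_add[OF this conv_const[of a]] show ?thesis by simp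
qed

lemma normal_iff_unit_norm_generates:
  "normal_space conv le \<longleftrightarrow> (\<forall>x a. conv x a \<longleftrightarrow> (\<lambda>n. unit_norm (x n - a)) \<longlonglongrightarrow> 0)"
proof
  assume "normal_space conv le"
  then show "\<forall>x a. conv x a \<longleftrightarrow> (\<lambda>n. unit_norm (x n - a)) \<longlonglongrightarrow> 0"
    using unit_norm_tendsto_if_conv conv_if_unit_norm_tendsto by blast
next
  assume "\<forall>x a. conv x a \<longleftrightarrow> (\<lambda>n. unit_norm (x n - a)) \<longlonglongrightarrow> 0"
  then show "normal_space conv le"
    by (intro normal_if_monotone_norm_generates[OF monotone_norm_unit_norm]) blast
qed

end

theorem theorem7p9:
  fixes conv :: "(nat \<Rightarrow> 'a::real_vector) \<Rightarrow> 'a \<Rightarrow> bool"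
    and le lt :: "'a \<Rightarrow> 'a \<Rightarrow> bool"
  assumes "solid_vector_space conv le lt"
  shows "(normal_space conv le \<longleftrightarrow>
            (\<exists>N. monotone_norm le N \<and>
                 (\<forall>x a. conv x a \<longleftrightarrow> (\<lambda>n. N (x n - a)) \<longlonglongrightarrow> 0))) \<and>
         (normal_space conv le \<longleftrightarrow>
            (\<forall>x a. conv x a \<longleftrightarrow> limitin (order_topology_of lt) x a sequentially))"
proof -
  obtain e where "e \<in> conv_interior conv (pos_cone le)"
    using assms unfolding solid_vector_space_def solid_cone_def by blast
  with assms interpret order_unit_space conv le lt e
    by unfold_locales (auto simp: solid_vector_space_def)
  have "normal_space conv le \<longleftrightarrow>
      (\<exists>N. monotone_norm le N \<and> (\<forall>x a. conv x a \<longleftrightarrow> (\<lambda>n. N (x n - a)) \<longlonglongrightarrow> 0))"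
  proof
    assume "normal_space conv le"
    then show "\<exists>N. monotone_norm le N \<and> (\<forall>x a. conv x a \<longleftrightarrow> (\<lambda>n. N (x n - a)) \<longlonglongrightarrow> 0)"
      using monotone_norm_unit_norm normal_iff_unit_norm_generates by blast
  qed (use normal_if_monotone_norm_generates in blast)
  moreover have "normal_space conv le \<longleftrightarrow>
      (\<forall>x a. conv x a \<longleftrightarrow> limitin (order_topology_of lt) x a sequentially)"
    unfolding normal_iff_unit_norm_generates limitin_order_topology_iff_unit_norm ..
  ultimately show ?thesis by blast
qed

end
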